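(* Let $X$ be a Banach space, let $A$ generate a $C_0$-semigroup on $X$, let $U$ be a finite-dimensional Banach space and let $Z$ be one of $E_\Phi$ (for a Young function $\Phi$), $L^1$, $L^\infty$ or ${\rm C}$. Let $B\in\mathcal{L}(U,X_{-1})$. Then $B$ is $Z$-admissible if and only if for every $f\in U$ the operator $Bf\in\mathcal{L}(\mathbb{C},X_{-1})$, $z\mapsto zBf$, is $Z$-admissible. The same equivalence holds with "$Z$-admissible" replaced by "infinite-time $Z$-admissible" on both sides.
   Context: $X_{-1}$ is the completion of $X$ w.r.t. $\|(\beta-A)^{-1}\cdot\|$ for some $\beta\in\rho(A)$, and $T_{-1}$ is the extension of the semigroup $T$ generated by $A$ to $X_{-1}$. A Young function is a continuous, convex, increasing $\Phi:[0,\infty)\to[0,\infty)$ with $\Phi(x)/x\to0$ as $x\to0$ and $\Phi(x)/x\to\infty$ as $x\to\infty$. For an interval $I$, $L_\Phi(I;U)$ is the space of Bochner measurable $u:I\to U$ with $\Phi(\|ku(\cdot)\|)$ integrable for some $k>0$, normed by $\|u\|=\inf\{k>0:\int_I\Phi(\|u(s)\|/k)\,ds\le1\}$, and $E_\Phi(I;U)$ is the closure in $L_\Phi(I;U)$ of the $L^\infty(I;U)$-functions with bounded essential support. ${\rm C}(I;U)$ denotes continuous functions with the sup norm. For $Z$ one of these spaces, $B\in\mathcal{L}(U,X_{-1})$ is $Z$-admissible if for all $t>0$ the operator $\Phi_t:Z(0,t;U)\to X_{-1}$, $u\mapsto\int_0^tT_{-1}(s)Bu(s)\,ds$, has range in $X$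 (it is then bounded into $X$); it is infinite-time $Z$-admissible if moreover $\sup_{t>0}\|\Phi_t\|_{\mathcal{L}(Z(0,t;U),X)}<\infty$. *)

theory Defs
  imports "HOL-Analysis.Analysis"
begin

text \<open>HOL-Analysis only provides real normed vector spaces.\<close>

class complex_normed_space = real_normed_vector +
  fixes cscale :: "complex \<Rightarrow> 'a \<Rightarrow> 'a"
  assumes cscale_of_real: "cscale (complex_of_real r) x = scaleR r x"
    and cscale_add_right: "cscale a (x + y) = cscale a x + cscale a y"
    and cscale_add_left: "cscale (a + b) x = cscale a x + cscale b x"
    and cscale_cscale: "cscale a (cscale b x) = cscale (a * b) x"
    and cscale_one: "cscale 1 x = x"
    and norm_cscale: "norm (cscale a x) = cmod a * norm x"

instantiation complex :: complex_normed_space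
begin
definition cscale_complex :: "complex \<Rightarrow> complex \<Rightarrow> complex" where
  "cscale_complex a x = a * x"
instance
  by standard (auto simp: cscale_complex_def scaleR_conv_of_real algebra_simps norm_mult)
end

definition cbounded_linear :: "('a::complex_normed_space \<Rightarrow> 'b::complex_normed_space) \<Rightarrow> bool" where
  "cbounded_linear f \<longleftrightarrow> bounded_linear f \<and> (\<forall>c x. f (cscale c x) = cscale c (f x))"

definition complex_finite_dim :: "'a::complex_normed_space set \<Rightarrow> bool" where
  "complex_finite_dim V \<longleftrightarrow>
     (\<exists>S. S \<subseteq> V \<and> finite S \<and> (\<forall>x\<in>V. \<exists>c. x = (\<Sum>s\<in>S. cscale (c s) s)))"

definition c0_semigroup :: "(real \<Rightarrow> 'x::complex_normed_space \<Rightarrow> 'x) \<Rightarrow> bool" where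
  "c0_semigroup T \<longleftrightarrow>
     (\<forall>t\<ge>0. cbounded_linear (T t)) \<and> T 0 = id \<and>
     (\<forall>s\<ge>0. \<forall>t\<ge>0. T (s + t) = T s \<circ> T t) \<and>
     (\<forall>x. ((\<lambda>t. T t x) \<longlongrightarrow> x) (at_right 0))"

definition gen_domain :: "(real \<Rightarrow> 'x::complex_normed_space \<Rightarrow> 'x) \<Rightarrow> 'x set" where
  "gen_domain T = {x. \<exists>y. ((\<lambda>h. (T h x - x) /\<^sub>R h) \<longlongrightarrow> y) (at_right 0)}"

definition generator :: "(real \<Rightarrow> 'x::complex_normed_space \<Rightarrow> 'x) \<Rightarrow> 'x \<Rightarrow> 'x" where
  "generator T x = Lim (at_right 0) (\<lambda>h. (T h x - x) /\<^sub>R h)"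

definition resolvent :: "(real \<Rightarrow> 'x::complex_normed_space \<Rightarrow> 'x) \<Rightarrow> complex \<Rightarrow> 'x \<Rightarrow> 'x" where
  "resolvent T \<beta> = the_inv_into (gen_domain T) (\<lambda>x. cscale \<beta> x - generator T x)"

definition in_resolvent_set :: "(real \<Rightarrow> 'x::complex_normed_space \<Rightarrow> 'x) \<Rightarrow> complex \<Rightarrow> bool" where
  "in_resolvent_set T \<beta> \<longleftrightarrow>
     bij_betw (\<lambda>x. cscale \<beta> x - generator T x) (gen_domain T) UNIV \<and>
     cbounded_linear (resolvent T \<beta>)"

text \<open>\<open>(Xm, j, Tm)\<close> is (a realisation of) the extrapolation space \<open>X\<^sub>-\<^sub>1\<close> with the
  extended semigroup \<open>T\<^sub>-\<^sub>1\<close>: \<open>Xm\<close> is a Banach space (by its sort) into which \<open>X\<close>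
  embeds via the complex-linear map \<open>j\<close>, isometrically for the norm
  \<open>\<parallel>(\<beta>-A)\<^sup>-\<^sup>1 \<cdot>\<parallel>\<close> on \<open>X\<close>, with dense range (i.e. \<open>Xm\<close> is the completion of \<open>X\<close>
  for that norm), and \<open>Tm t\<close> is the bounded operator on \<open>Xm\<close> extending \<open>T t\<close>.\<close>
definition extrapolation_space ::
  "(real \<Rightarrow> 'x::complex_normed_space \<Rightarrow> 'x) \<Rightarrow> complex \<Rightarrow> ('x \<Rightarrow> 'm::complex_normed_space)
     \<Rightarrow> (real \<Rightarrow> 'm \<Rightarrow> 'm) \<Rightarrow> bool" where
  "extrapolation_space T \<beta> j Tm \<longleftrightarrow>
     in_resolvent_set T \<beta> \<and>
     (\<forall>x y. j (x + y) = j x + j y) \<and> (\<forall>c x. j (cscale c x) = cscale c (j x)) \<and>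
     (\<forall>x. norm (j x) = norm (resolvent T \<beta> x)) \<and>
     closure (range j) = UNIV \<and>
     (\<forall>t\<ge>0. cbounded_linear (Tm t) \<and> (\<forall>x. Tm t (j x) = j (T t x)))"

definition bochner_measurable_on :: "real set \<Rightarrow> (real \<Rightarrow> 'a::real_normed_vector) \<Rightarrow> bool" where
  "bochner_measurable_on I u \<longleftrightarrow>
     (\<exists>s :: nat \<Rightarrow> real \<Rightarrow> 'a.
        (\<forall>n. finite (s n ` I) \<and> (\<forall>v. {x\<in>I. s n x = v} \<in> sets (lebesgue_on I))) \<and>
        (AE x in lebesgue_on I. (\<lambda>n. s n x) \<longlonglongrightarrow> u x))"

definition young_function :: "(real \<Rightarrow> real) \<Rightarrow> bool" where
  "young_function \<Phi> \<longleftrightarrow>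
     continuous_on {0..} \<Phi> \<and> convex_on {0..} \<Phi> \<and> strict_mono_on {0..} \<Phi> \<and>
     (\<forall>x\<ge>0. \<Phi> x \<ge> 0) \<and>
     ((\<lambda>x. \<Phi> x / x) \<longlongrightarrow> 0) (at_right 0) \<and>
     filterlim (\<lambda>x. \<Phi> x / x) at_top at_top"

definition orlicz_L :: "(real \<Rightarrow> real) \<Rightarrow> real set \<Rightarrow> (real \<Rightarrow> 'a::real_normed_vector) \<Rightarrow> bool" where
  "orlicz_L \<Phi> I u \<longleftrightarrow> bochner_measurable_on I u \<and>
     (\<exists>k>0. integrable (lebesgue_on I) (\<lambda>s. \<Phi> (norm (k *\<^sub>R u s))))"

definition orlicz_norm :: "(real \<Rightarrow> real) \<Rightarrow> real set \<Rightarrow> (real \<Rightarrow> 'a::real_normed_vector) \<Rightarrow> real" where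
  "orlicz_norm \<Phi> I u =
     Inf {k. k > 0 \<and> (\<integral>\<^sup>+ s. ennreal (\<Phi> (norm (u s) / k)) \<partial>lebesgue_on I) \<le> 1}"

definition Linf_on :: "real set \<Rightarrow> (real \<Rightarrow> 'a::real_normed_vector) \<Rightarrow> bool" where
  "Linf_on I u \<longleftrightarrow> bochner_measurable_on I u \<and> (\<exists>C. AE s in lebesgue_on I. norm (u s) \<le> C)"

definition bounded_ess_support :: "real set \<Rightarrow> (real \<Rightarrow> 'a::real_normed_vector) \<Rightarrow> bool" where
  "bounded_ess_support I u \<longleftrightarrow> (\<exists>R. AE s in lebesgue_on I. \<bar>s\<bar> > R \<longrightarrow> u s = 0)"

definition orlicz_E :: "(real \<Rightarrow> real) \<Rightarrow> real set \<Rightarrow> (real \<Rightarrow> 'a::real_normed_vector) \<Rightarrow> bool" where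
  "orlicz_E \<Phi> I u \<longleftrightarrow> orlicz_L \<Phi> I u \<and>
     (\<forall>\<epsilon>>0. \<exists>v. Linf_on I v \<and> bounded_ess_support I v \<and>
                orlicz_norm \<Phi> I (\<lambda>s. u s - v s) < \<epsilon>)"

datatype zspace = ZE "real \<Rightarrow> real" | ZL1 | ZLinf | ZC

definition valid_zspace :: "zspace \<Rightarrow> bool" where
  "valid_zspace Z = (case Z of ZE \<Phi> \<Rightarrow> young_function \<Phi> | _ \<Rightarrow> True)"

definition zmem :: "zspace \<Rightarrow> real set \<Rightarrow> (real \<Rightarrow> 'a::real_normed_vector) \<Rightarrow> bool" where
  "zmem Z I u = (case Z of
      ZE \<Phi> \<Rightarrow> orlicz_E \<Phi> I u
    | ZL1 \<Rightarrow> bochner_measurable_on I u \<and> integrable (lebesgue_on I) (\<lambda>s. norm (u s))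
    | ZLinf \<Rightarrow> Linf_on I u
    | ZC \<Rightarrow> continuous_on I u)"

definition znorm :: "zspace \<Rightarrow> real set \<Rightarrow> (real \<Rightarrow> 'a::real_normed_vector) \<Rightarrow> real" where
  "znorm Z I u = (case Z of
      ZE \<Phi> \<Rightarrow> orlicz_norm \<Phi> I u
    | ZL1 \<Rightarrow> (\<integral> s. norm (u s) \<partial>lebesgue_on I)
    | ZLinf \<Rightarrow> Inf {C. C \<ge> 0 \<and> (AE s in lebesgue_on I. norm (u s) \<le> C)}
    | ZC \<Rightarrow> Sup ((\<lambda>s. norm (u s)) ` I))"

text \<open>\<open>B \<in> \<L>(V,X\<^sub>-\<^sub>1)\<close> is \<open>Z\<close>-admissible: for every \<open>t > 0\<close> and every \<open>u \<in> Z(0,t;V)\<close>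
  the integral \<open>\<integral>\<^sub>0\<^sup>t T\<^sub>-\<^sub>1(s) B u(s) ds\<close> lies in \<open>X\<close> (i.e. equals \<open>j x\<close> for some \<open>x\<close>).\<close>
definition z_admissible ::
  "zspace \<Rightarrow> (real \<Rightarrow> 'm::complex_normed_space \<Rightarrow> 'm) \<Rightarrow> ('x::complex_normed_space \<Rightarrow> 'm)
     \<Rightarrow> ('v::complex_normed_space \<Rightarrow> 'm) \<Rightarrow> bool" where
  "z_admissible Z Tm j B \<longleftrightarrow>
     (\<forall>t>0. \<forall>u::real \<Rightarrow> 'v. zmem Z {0..t} u \<longrightarrow>
        (\<exists>x. ((\<lambda>s. Tm s (B (u s))) has_integral j x) {0..t}))"

text \<open>Infinite-time \<open>Z\<close>-admissibility: additionally \<open>sup\<^sub>t\<^sub>>\<^sub>0 \<parallel>\<Phi>\<^sub>t\<parallel> < \<infinity>\<close>.\<close>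
definition inf_z_admissible ::
  "zspace \<Rightarrow> (real \<Rightarrow> 'm::complex_normed_space \<Rightarrow> 'm) \<Rightarrow> ('x::complex_normed_space \<Rightarrow> 'm)
     \<Rightarrow> ('v::complex_normed_space \<Rightarrow> 'm) \<Rightarrow> bool" where
  "inf_z_admissible Z Tm j B \<longleftrightarrow>
     (\<exists>M. \<forall>t>0. \<forall>u::real \<Rightarrow> 'v. zmem Z {0..t} u \<longrightarrow>
        (\<exists>x. ((\<lambda>s. Tm s (B (u s))) has_integral j x) {0..t} \<and> norm x \<le> M * znorm Z {0..t} u))"

end

theory Submission
  imports Defs
begin

text \<open>Over \<open>\<real>\<close>, a finite-dimensional normed space has a finite basis whose coordinate
  functionals \<open>c\<^sub>b\<close> are bounded (finite-dimensional subspaces are closed, so each basis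
  vector has positive distance from the span of the others).  Hence
  \<open>B v = \<Sum>\<^sub>b c\<^sub>b(v) B b\<close> is a finite sum of the rank-one operators \<open>z \<mapsto> z B b\<close>
  precomposed with bounded maps, while conversely \<open>z \<mapsto> z B f\<close> is \<open>B\<close> precomposed with
  \<open>z \<mapsto> z f\<close>.  Each space \<open>Z\<close> is mapped into itself by a bounded linear map \<open>L\<close>, with
  norm growing by at most a factor \<open>\<parallel>L\<parallel>\<close>, so (infinite-time) admissibility passes to
  such compositions and to finite sums.\<close>

section \<open>Bochner measurability\<close>

lemma complete_measure_lebesgue_on:
  assumes "I \<in> sets lebesgue"
  shows "complete_measure (lebesgue_on I)"
proof
  fix A B assume BA: "B \<subseteq> A" and A: "A \<in> null_sets (lebesgue_on I)"
  then have AI: "A \<subseteq> I" and A': "A \<in> null_sets lebesgue"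
    using null_sets_restrict_space[OF assms] by auto
  have "B \<in> null_sets lebesgue"
    using completion.complete2[OF BA A'] .
  then show "B \<in> sets (lebesgue_on I)"
    using BA AI assms by (simp add: sets_restrict_space_iff null_setsD2)
qed

lemma (in complete_measure) borel_measurable_AE_eq:
  fixes f g :: "'a \<Rightarrow> 'b::topological_space"
  assumes f: "f \<in> borel_measurable M" and ae: "AE x in M. f x = g x"
  shows "g \<in> borel_measurable M"
proof (rule borel_measurableI)
  fix S :: "'b set" assume "open S"
  have A: "f -` S \<inter> space M \<in> sets M" using f \<open>open S\<close> by (simp add: measurable_sets borel_open)
  have "AE x in M. x \<in> f -` S \<inter> space M \<longleftrightarrow> x \<in> g -` S \<inter> space M"
    using ae by eventually_elim auto
  then show "g -` S \<inter> space M \<in> sets M"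
    using in_sets_AE[OF _ A] by blast
qed

lemma simple_function_lebesgue_onI:
  assumes "finite (s ` I)" "\<And>v. {x\<in>I. s x = v} \<in> sets (lebesgue_on I)"
  shows "simple_function (lebesgue_on I) s"
  unfolding simple_function_def
proof (intro conjI ballI)
  show "finite (s ` space (lebesgue_on I))" using assms by simp
  fix v
  have "s -` {v} \<inter> space (lebesgue_on I) = {x\<in>I. s x = v}" by auto
  then show "s -` {v} \<inter> space (lebesgue_on I) \<in> sets (lebesgue_on I)" using assms(2) by metis
qed

lemma bochner_measurable_on_simple_approx:
  assumes "bochner_measurable_on I u"
  obtains s where "\<And>n. simple_function (lebesgue_on I) (s n)"
    and "AE x in lebesgue_on I. (\<lambda>n. s n x) \<longlonglongrightarrow> u x"
  using assms simple_function_lebesgue_onI unfolding bochner_measurable_on_def by metis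

lemma bochner_measurable_on_continuous_comp2:
  fixes u :: "real \<Rightarrow> 'a::real_normed_vector" and v :: "real \<Rightarrow> 'b::real_normed_vector"
    and h :: "'a \<Rightarrow> 'b \<Rightarrow> 'c::real_normed_vector"
  assumes h: "continuous_on UNIV (\<lambda>p. h (fst p) (snd p))"
    and u: "bochner_measurable_on I u" and v: "bochner_measurable_on I v"
  shows "bochner_measurable_on I (\<lambda>x. h (u x) (v x))"
proof -
  obtain s where s: "\<And>n. simple_function (lebesgue_on I) (s n)"
    and s_lim: "AE x in lebesgue_on I. (\<lambda>n. s n x) \<longlonglongrightarrow> u x"
    using bochner_measurable_on_simple_approx[OF u] by blast
  obtain s' where s': "\<And>n. simple_function (lebesgue_on I) (s' n)"
    and s'_lim: "AE x in lebesgue_on I. (\<lambda>n. s' n x) \<longlonglongrightarrow> v x"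
    using bochner_measurable_on_simple_approx[OF v] by blast
  define g where "g n x = h (s n x) (s' n x)" for n x
  have g: "simple_function (lebesgue_on I) (g n)" for n
    unfolding g_def by (rule simple_function_compose2[OF s s'])
  show ?thesis
    unfolding bochner_measurable_on_def
  proof (intro exI conjI allI)
    fix n w
    show "finite (g n ` I)" using simple_functionD(1)[OF g] by simp
    have "{x\<in>I. g n x = w} = g n -` {w} \<inter> space (lebesgue_on I)" by auto
    then show "{x\<in>I. g n x = w} \<in> sets (lebesgue_on I)" using simple_functionD(2)[OF g] by metis
  next
    have h_cont: "isCont (\<lambda>p. h (fst p) (snd p)) q" for q
      using h by (simp add: continuous_on_eq_continuous_at del: split_paired_All)
    show "AE x in lebesgue_on I. (\<lambda>n. g n x) \<longlonglongrightarrow> h (u x) (v x)"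
      using s_lim s'_lim
    proof eventually_elim
      case (elim x)
      then have "(\<lambda>n. (s n x, s' n x)) \<longlonglongrightarrow> (u x, v x)" by (intro tendsto_Pair)
      from isCont_tendsto_compose[OF h_cont this] show ?case by (simp add: g_def)
    qed
  qed
qed

lemma bochner_measurable_on_bounded_linear:
  assumes "bounded_linear L" "bochner_measurable_on I u"
  shows "bochner_measurable_on I (\<lambda>x. L (u x))"
  using bochner_measurable_on_continuous_comp2[of "\<lambda>a b. L a" I u u] assms
  by (simp add: bounded_linear.continuous_on continuous_on_fst)

lemma bochner_measurable_on_norm:
  assumes "bochner_measurable_on I u"
  shows "bochner_measurable_on I (\<lambda>s. norm (u s))"
  using bochner_measurable_on_continuous_comp2[of "\<lambda>a b. norm a" I u u] assms
  by (simp add: continuous_on_norm continuous_on_fst)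

lemma borel_measurable_lebesgue_on_if_bochner_measurable_on:
  fixes u :: "real \<Rightarrow> 'b::{banach, second_countable_topology}"
  assumes I: "I \<in> sets lebesgue" and u: "bochner_measurable_on I u"
  shows "u \<in> borel_measurable (lebesgue_on I)"
proof -
  obtain s where s: "\<And>n. simple_function (lebesgue_on I) (s n)"
    and s_lim: "AE x in lebesgue_on I. (\<lambda>n. s n x) \<longlonglongrightarrow> u x"
    using bochner_measurable_on_simple_approx[OF u] by blast
  have "(\<lambda>x. lim (\<lambda>n. s n x)) \<in> borel_measurable (lebesgue_on I)"
    using s by (intro borel_measurable_lim_metric borel_measurable_simple_function)
  moreover have "AE x in lebesgue_on I. lim (\<lambda>n. s n x) = u x"
    using s_lim by eventually_elim (rule limI)
  ultimately show ?thesis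
    using complete_measure.borel_measurable_AE_eq[OF complete_measure_lebesgue_on[OF I]] by blast
qed

section \<open>Young functions and the Luxemburg norm\<close>

lemma young_function_mono:
  assumes "young_function \<Phi>" "0 \<le> x" "x \<le> y"
  shows "\<Phi> x \<le> \<Phi> y"
  using assms strict_mono_on_leD[of "{0..}" \<Phi> x y] unfolding young_function_def by simp

lemma young_function_nonneg:
  assumes "young_function \<Phi>" "0 \<le> x"
  shows "0 \<le> \<Phi> x"
  using assms unfolding young_function_def by blast

lemma young_function_zero:
  assumes Y: "young_function \<Phi>"
  shows "\<Phi> 0 = 0"
proof -
  have "(\<Phi> \<longlongrightarrow> \<Phi> 0) (at 0 within {0..})"
    using Y by (simp add: young_function_def continuous_on_def)
  then have lim_\<Phi>: "(\<Phi> \<longlongrightarrow> \<Phi> 0) (at_right 0)"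
    by (rule tendsto_within_subset) auto
  have "((\<lambda>x. x * (\<Phi> x / x)) \<longlongrightarrow> 0 * 0) (at_right (0::real))"
    using Y unfolding young_function_def by (intro tendsto_mult tendsto_ident_at) auto
  moreover have "\<forall>\<^sub>F x in at_right (0::real). x * (\<Phi> x / x) = \<Phi> x"
    using eventually_at_right_less by (rule eventually_mono) simp
  ultimately have "(\<Phi> \<longlongrightarrow> 0) (at_right 0)"
    using Lim_transform_eventually by fastforce
  then show ?thesis
    using tendsto_unique[OF trivial_limit_at_right_real lim_\<Phi>] by simp
qed

lemma young_function_scale_le:
  assumes Y: "young_function \<Phi>" and "0 \<le> l" "l \<le> 1" "0 \<le> y"
  shows "\<Phi> (l * y) \<le> l * \<Phi> y"
proof -
  have "\<Phi> ((1 - l) *\<^sub>R 0 + l *\<^sub>R y) \<le> (1 - l) * \<Phi> 0 + l * \<Phi> y"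
    using Y assms by (intro convex_onD[of "{0..}"]) (auto simp: young_function_def)
  then show ?thesis using young_function_zero[OF Y] by simp
qed

lemma young_function_midpoint_le:
  assumes Y: "young_function \<Phi>" and "0 \<le> a" "0 \<le> b"
  shows "\<Phi> ((a + b) / 2) \<le> (\<Phi> a + \<Phi> b) / 2"
proof -
  have "\<Phi> ((1 - 1/2) *\<^sub>R a + (1/2) *\<^sub>R b) \<le> (1 - 1/2) * \<Phi> a + (1/2) * \<Phi> b"
    using Y assms by (intro convex_onD[of "{0..}"]) (auto simp: young_function_def)
  then show ?thesis by (simp add: field_simps)
qed

lemma young_function_norm_diff_le:
  assumes Y: "young_function \<Phi>" and k: "k > 0" and b: "norm b \<le> C"
  shows "\<Phi> (norm ((k / 2) *\<^sub>R (a - b))) \<le> (\<Phi> (norm (k *\<^sub>R a)) + \<Phi> (k * C)) / 2"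
proof -
  have "norm ((k / 2) *\<^sub>R (a - b)) \<le> (k / 2) * (norm a + C)"
    using k b norm_triangle_ineq4[of a b] by (simp add: mult_left_mono)
  also have "\<dots> = (norm (k *\<^sub>R a) + k * C) / 2"
    using k by (simp add: field_simps)
  finally have "\<Phi> (norm ((k / 2) *\<^sub>R (a - b))) \<le> \<Phi> ((norm (k *\<^sub>R a) + k * C) / 2)"
    by (rule young_function_mono[OF Y norm_ge_zero])
  also have "\<dots> \<le> (\<Phi> (norm (k *\<^sub>R a)) + \<Phi> (k * C)) / 2"
    using k order_trans[OF norm_ge_zero b] by (intro young_function_midpoint_le[OF Y]) auto
  finally show ?thesis .
qed

lemma continuous_on_young_function_norm:
  assumes "young_function \<Phi>"
  shows "continuous_on UNIV (\<lambda>x::'a::real_normed_vector. \<Phi> (norm x))"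
proof -
  have "continuous_on {0..} \<Phi>" using assms by (simp add: young_function_def)
  then show ?thesis by (rule continuous_on_compose2[OF _ continuous_on_norm_id]) auto
qed

lemma borel_measurable_young_function_norm:
  fixes w :: "real \<Rightarrow> 'a::real_normed_vector"
  assumes "young_function \<Phi>" "I \<in> sets lebesgue" "bochner_measurable_on I w"
  shows "(\<lambda>s. \<Phi> (norm (w s))) \<in> borel_measurable (lebesgue_on I)"
proof -
  have "continuous_on UNIV (\<lambda>p::'a \<times> 'a. \<Phi> (norm (fst p)))"
    by (rule continuous_on_compose2[OF continuous_on_young_function_norm[OF assms(1)]
          continuous_on_fst[OF continuous_on_id]]) auto
  then show ?thesis
    using assms bochner_measurable_on_continuous_comp2[of "\<lambda>a b. \<Phi> (norm a)" I w w]
    by (auto intro: borel_measurable_lebesgue_on_if_bochner_measurable_on)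
qed

definition luxemburg_set :: "(real \<Rightarrow> real) \<Rightarrow> real set \<Rightarrow> (real \<Rightarrow> 'a::real_normed_vector) \<Rightarrow> real set" where
  "luxemburg_set \<Phi> I w = {k. k > 0 \<and> (\<integral>\<^sup>+ s. ennreal (\<Phi> (norm (w s) / k)) \<partial>lebesgue_on I) \<le> 1}"

lemma orlicz_norm_eq_Inf_luxemburg_set: "orlicz_norm \<Phi> I w = Inf (luxemburg_set \<Phi> I w)"
  unfolding orlicz_norm_def luxemburg_set_def by simp

lemma luxemburg_set_nonempty:
  fixes w :: "real \<Rightarrow> 'a::real_normed_vector"
  assumes Y: "young_function \<Phi>" and I: "I \<in> sets lebesgue" and w: "orlicz_L \<Phi> I w"
  shows "luxemburg_set \<Phi> I w \<noteq> {}"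
proof -
  obtain k0 where k0: "k0 > 0" and int: "integrable (lebesgue_on I) (\<lambda>s. \<Phi> (norm (k0 *\<^sub>R w s)))"
    using w unfolding orlicz_L_def by blast
  define J where "J = (\<integral> s. \<Phi> (norm (k0 *\<^sub>R w s)) \<partial>lebesgue_on I)"
  have J: "0 \<le> J"
    unfolding J_def by (intro integral_nonneg_AE AE_I2 young_function_nonneg[OF Y]) simp
  \<comment> \<open>\<open>\<Phi> (l y) \<le> l \<Phi> y\<close> for \<open>l \<le> 1\<close> bounds the modular at \<open>1 / (l k0)\<close> by \<open>l J \<le> 1\<close>\<close>
  define l where "l = 1 / (J + 1)"
  have l: "0 < l" "l \<le> 1" using J unfolding l_def by auto
  define k where "k = 1 / (l * k0)"
  have k: "k > 0" using l k0 unfolding k_def by auto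
  have "norm (w s) / k = l * norm (k0 *\<^sub>R w s)" for s
    using k0 unfolding k_def by (simp add: field_simps)
  then have "(\<integral>\<^sup>+ s. ennreal (\<Phi> (norm (w s) / k)) \<partial>lebesgue_on I)
      \<le> (\<integral>\<^sup>+ s. ennreal (l * \<Phi> (norm (k0 *\<^sub>R w s))) \<partial>lebesgue_on I)"
    using l by (auto intro!: nn_integral_mono ennreal_leI young_function_scale_le[OF Y])
  also have "\<dots> = ennreal (l * J)"
    unfolding J_def using l int
    by (subst nn_integral_eq_integral) (auto intro!: mult_nonneg_nonneg young_function_nonneg[OF Y])
  also have "\<dots> \<le> 1" using J unfolding l_def by (simp add: field_simps)
  finally show ?thesis using k unfolding luxemburg_set_def by blast
qed

lemma luxemburg_set_scaled:
  assumes Y: "young_function \<Phi>" and K: "K > 0"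
    and le: "\<And>s. s \<in> I \<Longrightarrow> norm (w2 s) \<le> K * norm (w1 s)"
    and k: "k \<in> luxemburg_set \<Phi> I w1"
  shows "K * k \<in> luxemburg_set \<Phi> I w2"
proof -
  have k_pos: "k > 0" using k unfolding luxemburg_set_def by simp
  have "norm (w2 s) / (K * k) \<le> norm (w1 s) / k" if "s \<in> I" for s
    using divide_right_mono[OF le[OF that], of "K * k"] K k_pos by simp
  then have "(\<integral>\<^sup>+ s. ennreal (\<Phi> (norm (w2 s) / (K * k))) \<partial>lebesgue_on I)
      \<le> (\<integral>\<^sup>+ s. ennreal (\<Phi> (norm (w1 s) / k)) \<partial>lebesgue_on I)"
    using K k_pos by (intro nn_integral_mono ennreal_leI young_function_mono[OF Y]) auto
  then show ?thesis using k K unfolding luxemburg_set_def by auto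
qed

lemma cInf_le_scaled:
  fixes S T :: "real set"
  assumes "S \<noteq> {}" "\<And>c. c \<in> T \<Longrightarrow> 0 \<le> c" "K > 0" "\<And>c. c \<in> S \<Longrightarrow> K * c \<in> T"
  shows "Inf T \<le> K * Inf S"
proof -
  have "bdd_below T" using assms(2) unfolding bdd_below_def by blast
  then have "Inf T / K \<le> c" if "c \<in> S" for c
    using cInf_lower[OF assms(4)[OF that]] assms(3) by (simp add: divide_le_eq mult.commute)
  then have "Inf T / K \<le> Inf S" using assms(1) by (intro cInf_greatest)
  then show ?thesis using assms(3) by (simp add: divide_le_eq mult.commute)
qed

lemma orlicz_norm_le_scaled:
  assumes "young_function \<Phi>" "luxemburg_set \<Phi> I w1 \<noteq> {}" "K > 0"
    "\<And>s. s \<in> I \<Longrightarrow> norm (w2 s) \<le> K * norm (w1 s)"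
  shows "orlicz_norm \<Phi> I w2 \<le> K * orlicz_norm \<Phi> I w1"
  unfolding orlicz_norm_eq_Inf_luxemburg_set
proof (rule cInf_le_scaled[OF assms(2) _ assms(3)])
  show "c \<in> luxemburg_set \<Phi> I w2 \<Longrightarrow> 0 \<le> c" for c by (simp add: luxemburg_set_def)
  show "c \<in> luxemburg_set \<Phi> I w1 \<Longrightarrow> K * c \<in> luxemburg_set \<Phi> I w2" for c
    by (rule luxemburg_set_scaled[OF assms(1,3,4)])
qed

lemma orlicz_norm_nonneg:
  assumes "luxemburg_set \<Phi> I w \<noteq> {}"
  shows "0 \<le> orlicz_norm \<Phi> I w"
  unfolding orlicz_norm_eq_Inf_luxemburg_set
  using assms by (intro cInf_greatest) (auto simp: luxemburg_set_def)

lemma orlicz_norm_le: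
  assumes "k \<in> luxemburg_set \<Phi> I w"
  shows "orlicz_norm \<Phi> I w \<le> k"
proof -
  have "bdd_below (luxemburg_set \<Phi> I w)"
    unfolding bdd_below_def luxemburg_set_def by (intro exI[of _ 0]) auto
  then show ?thesis unfolding orlicz_norm_eq_Inf_luxemburg_set using cInf_lower[OF assms] by blast
qed

section \<open>The spaces \<open>Z\<close> under bounded linear maps\<close>

lemma Linf_on_bounded_linear:
  assumes L: "bounded_linear L" and u: "Linf_on I u"
  shows "Linf_on I (\<lambda>s. L (u s))"
proof -
  obtain C where u_meas: "bochner_measurable_on I u" and C: "AE s in lebesgue_on I. norm (u s) \<le> C"
    using u unfolding Linf_on_def by blast
  obtain K where K: "K > 0" "\<And>x. norm (L x) \<le> norm x * K"
    using bounded_linear.pos_bounded[OF L] by blast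
  have "AE s in lebesgue_on I. norm (L (u s)) \<le> C * K"
    using C
  proof eventually_elim
    case (elim s)
    have "norm (L (u s)) \<le> norm (u s) * K" by (rule K(2))
    also have "\<dots> \<le> C * K" using elim K(1) by (simp add: mult_right_mono)
    finally show ?case .
  qed
  then show ?thesis
    unfolding Linf_on_def using bochner_measurable_on_bounded_linear[OF L u_meas] by blast
qed

lemma bounded_ess_support_bounded_linear:
  assumes "bounded_linear L" "bounded_ess_support I u"
  shows "bounded_ess_support I (\<lambda>s. L (u s))"
proof -
  obtain R where "AE s in lebesgue_on I. \<bar>s\<bar> > R \<longrightarrow> u s = 0"
    using assms(2) unfolding bounded_ess_support_def by blast
  then have "AE s in lebesgue_on I. \<bar>s\<bar> > R \<longrightarrow> L (u s) = 0"
    by eventually_elim (simp add: linear_0[OF bounded_linear.linear[OF assms(1)]])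
  then show ?thesis unfolding bounded_ess_support_def by blast
qed

lemma orlicz_L_bounded_linear:
  assumes Y: "young_function \<Phi>" and I: "I \<in> sets lebesgue" and L: "bounded_linear L"
    and u: "orlicz_L \<Phi> I u"
  shows "orlicz_L \<Phi> I (\<lambda>s. L (u s))"
proof -
  obtain k0 where u_meas: "bochner_measurable_on I u" and k0: "k0 > 0"
    and int: "integrable (lebesgue_on I) (\<lambda>s. \<Phi> (norm (k0 *\<^sub>R u s)))"
    using u unfolding orlicz_L_def by blast
  obtain K where K: "K > 0" "\<And>x. norm (L x) \<le> norm x * K"
    using bounded_linear.pos_bounded[OF L] by blast
  define k where "k = k0 / K"
  have k: "k > 0" unfolding k_def using k0 K by simp
  have Lu_meas: "bochner_measurable_on I (\<lambda>s. L (u s))"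
    by (rule bochner_measurable_on_bounded_linear[OF L u_meas])
  have "norm (k *\<^sub>R L x) \<le> norm (k0 *\<^sub>R x)" for x
    using mult_left_mono[OF K(2)[of x], of k] k k0 K unfolding k_def by simp
  then have "\<Phi> (norm (k *\<^sub>R L (u s))) \<le> \<Phi> (norm (k0 *\<^sub>R u s))" for s
    by (rule young_function_mono[OF Y norm_ge_zero])
  then have "integrable (lebesgue_on I) (\<lambda>s. \<Phi> (norm (k *\<^sub>R L (u s))))"
  proof (intro Bochner_Integration.integrable_bound[OF int] AE_I2)
    show "(\<lambda>s. \<Phi> (norm (k *\<^sub>R L (u s)))) \<in> borel_measurable (lebesgue_on I)"
      using bochner_measurable_on_bounded_linear[OF bounded_linear_scaleR_right Lu_meas]
      by (rule borel_measurable_young_function_norm[OF Y I])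
    show "norm (\<Phi> (norm (k *\<^sub>R L (u s)))) \<le> norm (\<Phi> (norm (k0 *\<^sub>R u s)))"
      if "\<And>s. \<Phi> (norm (k *\<^sub>R L (u s))) \<le> \<Phi> (norm (k0 *\<^sub>R u s))" for s
      using that[of s] young_function_nonneg[OF Y norm_ge_zero, of "k *\<^sub>R L (u s)"] by simp
  qed
  then show ?thesis
    unfolding orlicz_L_def using Lu_meas k by blast
qed

lemma orlicz_L_diff_Linf_on:
  fixes u v :: "real \<Rightarrow> 'a::real_normed_vector"
  assumes Y: "young_function \<Phi>" and I: "I \<in> lmeasurable"
    and u: "orlicz_L \<Phi> I u" and v: "Linf_on I v"
  shows "orlicz_L \<Phi> I (\<lambda>s. u s - v s)"
proof -
  obtain k0 where u_meas: "bochner_measurable_on I u" and k0: "k0 > 0"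
    and int: "integrable (lebesgue_on I) (\<lambda>s. \<Phi> (norm (k0 *\<^sub>R u s)))"
    using u unfolding orlicz_L_def by blast
  obtain C where v_meas: "bochner_measurable_on I v" and C: "AE s in lebesgue_on I. norm (v s) \<le> C"
    using v unfolding Linf_on_def by blast
  have diff_meas: "bochner_measurable_on I (\<lambda>s. u s - v s)"
    by (rule bochner_measurable_on_continuous_comp2[OF _ u_meas v_meas]) (intro continuous_intros)
  interpret finite_measure "lebesgue_on I"
    using I by (rule finite_measure_lebesgue_on)
  define h where "h = k0 / 2"
  have h: "h > 0" unfolding h_def using k0 by simp
  have "integrable (lebesgue_on I) (\<lambda>s. \<Phi> (norm (h *\<^sub>R (u s - v s))))"
  proof (rule Bochner_Integration.integrable_bound)
    show "integrable (lebesgue_on I) (\<lambda>s. (\<Phi> (norm (k0 *\<^sub>R u s)) + \<Phi> (k0 * C)) / 2)"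
      using int by (intro integrable_divide_zero Bochner_Integration.integrable_add) auto
    show "(\<lambda>s. \<Phi> (norm (h *\<^sub>R (u s - v s)))) \<in> borel_measurable (lebesgue_on I)"
      using bochner_measurable_on_bounded_linear[OF bounded_linear_scaleR_right diff_meas]
      by (rule borel_measurable_young_function_norm[OF Y fmeasurableD[OF I]])
    show "AE s in lebesgue_on I. norm (\<Phi> (norm (h *\<^sub>R (u s - v s))))
        \<le> norm ((\<Phi> (norm (k0 *\<^sub>R u s)) + \<Phi> (k0 * C)) / 2)"
      using C
    proof eventually_elim
      case (elim s)
      have "0 \<le> \<Phi> (norm (h *\<^sub>R (u s - v s)))" by (rule young_function_nonneg[OF Y norm_ge_zero])
      with young_function_norm_diff_le[OF Y k0 elim, of "u s"] show ?case by (simp add: h_def)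
    qed
  qed
  then show ?thesis
    unfolding orlicz_L_def using diff_meas h by blast
qed

lemma orlicz_E_bounded_linear:
  assumes Y: "young_function \<Phi>" and I: "I \<in> lmeasurable" and L: "bounded_linear L"
    and u: "orlicz_E \<Phi> I u"
  shows "orlicz_E \<Phi> I (\<lambda>s. L (u s))"
proof -
  obtain K where K: "K > 0" "\<And>x. norm (L x) \<le> norm x * K"
    using bounded_linear.pos_bounded[OF L] by blast
  have u_L: "orlicz_L \<Phi> I u" using u unfolding orlicz_E_def by blast
  have "\<exists>v. Linf_on I v \<and> bounded_ess_support I v \<and> orlicz_norm \<Phi> I (\<lambda>s. L (u s) - v s) < \<epsilon>"
    if \<epsilon>: "\<epsilon> > 0" for \<epsilon>
  proof -
    have "\<epsilon> / K > 0" using \<epsilon> K(1) by simp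
    then obtain v where v: "Linf_on I v" "bounded_ess_support I v"
      and close: "orlicz_norm \<Phi> I (\<lambda>s. u s - v s) < \<epsilon> / K"
      using u unfolding orlicz_E_def by blast
    have "luxemburg_set \<Phi> I (\<lambda>s. u s - v s) \<noteq> {}"
      using orlicz_L_diff_Linf_on[OF Y I u_L v(1)] by (rule luxemburg_set_nonempty[OF Y fmeasurableD[OF I]])
    then obtain k where k: "k \<in> luxemburg_set \<Phi> I (\<lambda>s. u s - v s)" "k < \<epsilon> / K"
      using close cInf_lessD unfolding orlicz_norm_eq_Inf_luxemburg_set by blast
    have "norm (L (u s) - L (v s)) \<le> K * norm (u s - v s)" for s
      using K(2)[of "u s - v s"] by (simp add: linear_diff[OF bounded_linear.linear[OF L]] mult.commute)
    then have "K * k \<in> luxemburg_set \<Phi> I (\<lambda>s. L (u s) - L (v s))"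
      by (intro luxemburg_set_scaled[OF Y K(1) _ k(1)])
    then have "orlicz_norm \<Phi> I (\<lambda>s. L (u s) - L (v s)) \<le> K * k"
      by (rule orlicz_norm_le)
    also have "\<dots> < \<epsilon>" using k(2) K by (simp add: less_divide_eq mult.commute)
    finally show ?thesis
      using Linf_on_bounded_linear[OF L v(1)] bounded_ess_support_bounded_linear[OF L v(2)] by blast
  qed
  then show ?thesis
    unfolding orlicz_E_def using orlicz_L_bounded_linear[OF Y fmeasurableD[OF I] L u_L] by blast
qed

lemma Linf_on_ess_bounds_nonempty:
  assumes "Linf_on I u"
  shows "{C. C \<ge> 0 \<and> (AE s in lebesgue_on I. norm (u s) \<le> C)} \<noteq> {}"
proof -
  obtain C where "AE s in lebesgue_on I. norm (u s) \<le> C"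
    using assms by (auto simp: Linf_on_def)
  then have "AE s in lebesgue_on I. norm (u s) \<le> max C 0"
    by eventually_elim simp
  then have "max C 0 \<in> {C. C \<ge> 0 \<and> (AE s in lebesgue_on I. norm (u s) \<le> C)}"
    by simp
  then show ?thesis by blast
qed

lemma integrable_norm_bounded_linear:
  assumes I: "I \<in> sets lebesgue" and L: "bounded_linear L"
    and u_meas: "bochner_measurable_on I u" and u_int: "integrable (lebesgue_on I) (\<lambda>s. norm (u s))"
  shows "integrable (lebesgue_on I) (\<lambda>s. norm (L (u s)))"
proof -
  obtain K where K: "K > 0" "\<And>x. norm (L x) \<le> norm x * K"
    using bounded_linear.pos_bounded[OF L] by blast
  show ?thesis
  proof (rule Bochner_Integration.integrable_bound)
    show "integrable (lebesgue_on I) (\<lambda>s. norm (u s) * K)"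
      using u_int by (rule integrable_mult_left)
    show "AE s in lebesgue_on I. norm (norm (L (u s))) \<le> norm (norm (u s) * K)"
      using K by (intro AE_I2) (simp add: abs_mult abs_of_pos)
    show "(\<lambda>s. norm (L (u s))) \<in> borel_measurable (lebesgue_on I)"
      using I bochner_measurable_on_norm[OF bochner_measurable_on_bounded_linear[OF L u_meas]]
      by (rule borel_measurable_lebesgue_on_if_bochner_measurable_on)
  qed
qed

lemma zmem_bounded_linear:
  fixes u :: "real \<Rightarrow> 'a::real_normed_vector" and L :: "'a \<Rightarrow> 'b::real_normed_vector"
  assumes Z: "valid_zspace Z" and I: "compact I" and L: "bounded_linear L"
    and u: "zmem Z I u"
  shows "zmem Z I (\<lambda>s. L (u s))"
proof (cases Z)
  case (ZE \<Phi>)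
  then show ?thesis
    using orlicz_E_bounded_linear[OF _ lmeasurable_compact[OF I] L] Z u
    by (simp add: valid_zspace_def zmem_def)
next
  case ZL1
  then show ?thesis
    using u integrable_norm_bounded_linear[OF fmeasurableD[OF lmeasurable_compact[OF I]] L]
      bochner_measurable_on_bounded_linear[OF L]
    by (simp add: zmem_def)
next
  case ZLinf
  then show ?thesis
    using Linf_on_bounded_linear[OF L] u by (simp add: zmem_def)
next
  case ZC
  then show ?thesis
    using bounded_linear.continuous_on[OF L] u by (simp add: zmem_def)
qed

lemma bdd_above_norm_image_compact:
  assumes "compact I" "continuous_on I u"
  shows "bdd_above ((\<lambda>s. norm (u s)) ` I)"
  using assms by (intro bounded_imp_bdd_above compact_imp_bounded compact_continuous_image continuous_on_norm)

lemma znorm_ZLinf_le_scaled: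
  assumes u: "Linf_on I u" and K: "K > 0"
    and le: "\<And>s. s \<in> I \<Longrightarrow> norm (v s) \<le> K * norm (u s)"
  shows "znorm ZLinf I v \<le> K * znorm ZLinf I u"
  unfolding znorm_def zspace.case
proof (rule cInf_le_scaled[OF Linf_on_ess_bounds_nonempty[OF u] _ K])
  fix c assume c: "c \<in> {C. C \<ge> 0 \<and> (AE s in lebesgue_on I. norm (u s) \<le> C)}"
  then have c0: "0 \<le> c" and c_bound: "AE s in lebesgue_on I. norm (u s) \<le> c" by auto
  have "AE s in lebesgue_on I. norm (v s) \<le> K * c"
    using c_bound AE_space
  proof eventually_elim
    case (elim s)
    then have "norm (v s) \<le> K * norm (u s)" using le by simp
    also have "\<dots> \<le> K * c" using elim K by simp
    finally show ?case .
  qed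
  then show "K * c \<in> {C. C \<ge> 0 \<and> (AE s in lebesgue_on I. norm (v s) \<le> C)}"
    using c0 K by simp
qed simp

lemma znorm_ZC_le_scaled:
  assumes I: "compact I" "I \<noteq> {}" and u: "continuous_on I u" and K: "K \<ge> 0"
    and le: "\<And>s. s \<in> I \<Longrightarrow> norm (v s) \<le> K * norm (u s)"
  shows "znorm ZC I v \<le> K * znorm ZC I u"
  unfolding znorm_def zspace.case
proof (rule cSup_least)
  show "(\<lambda>s. norm (v s)) ` I \<noteq> {}" using I(2) by simp
  fix y assume "y \<in> (\<lambda>s. norm (v s)) ` I"
  then obtain s where s: "s \<in> I" "y = norm (v s)" by blast
  have "norm (u s) \<le> Sup ((\<lambda>s. norm (u s)) ` I)"
    using bdd_above_norm_image_compact[OF I(1) u] s(1) by (intro cSup_upper) auto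
  then show "y \<le> K * Sup ((\<lambda>s. norm (u s)) ` I)"
    using le[OF s(1)] s(2) K by (meson mult_left_mono order_trans)
qed

lemma znorm_le_scaled:
  fixes u :: "real \<Rightarrow> 'a::real_normed_vector" and v :: "real \<Rightarrow> 'b::real_normed_vector"
  assumes Z: "valid_zspace Z" and I: "compact I" "I \<noteq> {}"
    and u: "zmem Z I u" and v: "zmem Z I v" and K: "K > 0"
    and le: "\<And>s. s \<in> I \<Longrightarrow> norm (v s) \<le> K * norm (u s)"
  shows "znorm Z I v \<le> K * znorm Z I u"
proof (cases Z)
  case (ZE \<Phi>)
  then have Y: "young_function \<Phi>" and u_L: "orlicz_L \<Phi> I u"
    using Z u by (auto simp: valid_zspace_def zmem_def orlicz_E_def)
  have "luxemburg_set \<Phi> I u \<noteq> {}"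
    using Y lmeasurable_compact[OF I(1)] u_L by (intro luxemburg_set_nonempty) auto
  then show ?thesis
    using orlicz_norm_le_scaled[OF Y _ K le] ZE by (simp add: znorm_def)
next
  case ZL1
  then have "(\<integral> s. norm (v s) \<partial>lebesgue_on I) \<le> (\<integral> s. K * norm (u s) \<partial>lebesgue_on I)"
    using u v le by (intro integral_mono) (auto simp: zmem_def)
  then show ?thesis
    using ZL1 by (simp add: znorm_def)
next
  case ZLinf
  then show ?thesis
    using znorm_ZLinf_le_scaled[OF _ K le] u by (simp add: zmem_def)
next
  case ZC
  then show ?thesis
    using znorm_ZC_le_scaled[OF I _ _ le] u K by (simp add: zmem_def)
qed

lemma znorm_nonneg:
  fixes u :: "real \<Rightarrow> 'a::real_normed_vector"
  assumes Z: "valid_zspace Z" and I: "compact I" "I \<noteq> {}" and u: "zmem Z I u"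
  shows "0 \<le> znorm Z I u"
proof (cases Z)
  case (ZE \<Phi>)
  then have "luxemburg_set \<Phi> I u \<noteq> {}"
    using Z u lmeasurable_compact[OF I(1)]
    by (intro luxemburg_set_nonempty) (auto simp: valid_zspace_def zmem_def orlicz_E_def)
  then show ?thesis
    using ZE orlicz_norm_nonneg by (simp add: znorm_def)
next
  case ZLinf
  have "{C. C \<ge> 0 \<and> (AE s in lebesgue_on I. norm (u s) \<le> C)} \<noteq> {}"
    using Linf_on_ess_bounds_nonempty[of I u] u ZLinf by (simp add: zmem_def)
  then show ?thesis
    using ZLinf by (auto simp: znorm_def intro: cInf_greatest)
next
  case ZC
  obtain s where s: "s \<in> I" using I(2) by blast
  have "bdd_above ((\<lambda>s. norm (u s)) ` I)"
    using u ZC I(1) by (simp add: zmem_def bdd_above_norm_image_compact)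
  then have "norm (u s) \<le> Sup ((\<lambda>s. norm (u s)) ` I)"
    using s by (intro cSup_upper) auto
  then show ?thesis
    using ZC by (simp add: znorm_def order_trans[OF norm_ge_zero])
qed (simp add: znorm_def)

section \<open>Bounded coordinates in finite dimension\<close>

lemma abs_mult_infdist_span_le:
  fixes b :: "'a::real_normed_vector"
  assumes "w \<in> span T"
  shows "\<bar>a\<bar> * infdist b (span T) \<le> norm (w + a *\<^sub>R b)"
proof (cases "a = 0")
  case False
  have "- (1/a) *\<^sub>R w \<in> span T" using assms span_scale by blast
  then have "infdist b (span T) \<le> dist b (- (1/a) *\<^sub>R w)"
    by (rule infdist_le)
  moreover have "w + a *\<^sub>R b = a *\<^sub>R (b - (- (1/a)) *\<^sub>R w)"
    using False by (simp add: algebra_simps)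
  ultimately show ?thesis by (simp add: dist_norm mult_left_mono)
qed simp

lemma Cauchy_if_dist_le_scaled:
  fixes a :: "nat \<Rightarrow> 'a::metric_space" and x :: "nat \<Rightarrow> 'b::metric_space"
  assumes x: "Cauchy x" and d: "d > 0" and le: "\<And>m n. d * dist (a m) (a n) \<le> dist (x m) (x n)"
  shows "Cauchy a"
proof (rule metric_CauchyI)
  fix e :: real assume "e > 0"
  then obtain M where M: "\<And>m n. m \<ge> M \<Longrightarrow> n \<ge> M \<Longrightarrow> dist (x m) (x n) < d * e"
    using metric_CauchyD[OF x, of "d * e"] d by auto
  have "dist (a m) (a n) < e" if "m \<ge> M" "n \<ge> M" for m n
  proof -
    have "d * dist (a m) (a n) < d * e" using le[of m n] M[OF that] by linarith
    then show ?thesis using d by (simp only: mult_less_cancel_left_pos)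
  qed
  then show "\<exists>M. \<forall>m\<ge>M. \<forall>n\<ge>M. dist (a m) (a n) < e" by blast
qed

lemma closed_span_finite:
  fixes S :: "'a::real_normed_vector set"
  assumes "finite S"
  shows "closed (span S)"
  using assms
proof (induction rule: finite_induct)
  case (insert b S)
  show ?case
  proof (cases "b \<in> span S")
    case True
    then show ?thesis using insert by (simp add: span_redundant)
  next
    case False
    \<comment> \<open>the \<open>b\<close>-coefficient is Lipschitz since \<open>b\<close> has positive distance from the closed \<open>span S\<close>\<close>
    define d where "d = infdist b (span S)"
    have d: "d > 0"
      unfolding d_def using infdist_pos_not_in_closed[OF insert(3) _ False] span_zero by blast
    show ?thesis
    proof (subst closed_sequential_limits, intro allI impI, elim conjE)
      fix x l assume x: "\<forall>n. x n \<in> span (insert b S)" and lim: "x \<longlonglongrightarrow> l"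
      then have "\<forall>n. \<exists>a. x n - a *\<^sub>R b \<in> span S"
        using span_breakdown_eq[of _ b S] by blast
      then obtain a where a: "\<And>n. x n - a n *\<^sub>R b \<in> span S" by metis
      have "d * dist (a m) (a n) \<le> dist (x m) (x n)" for m n
      proof -
        have "(x m - a m *\<^sub>R b) - (x n - a n *\<^sub>R b) \<in> span S" using a span_diff by blast
        from abs_mult_infdist_span_le[OF this, of "a m - a n" b]
        show ?thesis unfolding d_def by (simp add: algebra_simps dist_norm dist_real_def)
      qed
      then have "Cauchy a"
        using Cauchy_if_dist_le_scaled[OF LIMSEQ_imp_Cauchy[OF lim] d] by blast
      then obtain \<alpha> where "a \<longlonglongrightarrow> \<alpha>"
        using Cauchy_convergent_iff convergent_def by blast
      then have "(\<lambda>n. x n - a n *\<^sub>R b) \<longlonglongrightarrow> l - \<alpha> *\<^sub>R b"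
        by (intro tendsto_intros lim)
      then have "l - \<alpha> *\<^sub>R b \<in> span S"
        by (rule closed_sequentially[OF insert(3) a])
      then show "l \<in> span (insert b S)"
        using span_breakdown_eq[of l b S] by blast
    qed
  qed
qed simp

lemma representation_bounded:
  fixes Bs :: "'a::real_normed_vector set"
  assumes fin: "finite Bs" and ind: "independent Bs" and b: "b \<in> Bs"
  shows "\<exists>C. \<forall>x\<in>span Bs. \<bar>representation Bs x b\<bar> \<le> C * norm x"
proof -
  define W where "W = span (Bs - {b})"
  have "closed W" unfolding W_def using fin by (simp add: closed_span_finite)
  moreover have "b \<notin> W" unfolding W_def using ind b dependent_def by blast
  ultimately have d: "infdist b W > 0"
    using infdist_pos_not_in_closed span_zero unfolding W_def by blast
  have "\<bar>representation Bs x b\<bar> * infdist b W \<le> norm x" if x: "x \<in> span Bs" for x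
  proof -
    define w where "w = (\<Sum>b'\<in>Bs - {b}. representation Bs x b' *\<^sub>R b')"
    have "w \<in> span (Bs - {b})" unfolding w_def by (intro span_sum span_scale span_base) auto
    then have "\<bar>representation Bs x b\<bar> * infdist b W \<le> norm (w + representation Bs x b *\<^sub>R b)"
      unfolding W_def by (rule abs_mult_infdist_span_le)
    moreover have "x = (\<Sum>b'\<in>Bs. representation Bs x b' *\<^sub>R b')"
      using sum_representation_eq[OF ind x fin order_refl] by simp
    then have "x = w + representation Bs x b *\<^sub>R b"
      unfolding w_def sum.remove[OF fin b] by (simp add: add.commute)
    ultimately show ?thesis by simp
  qed
  then have "\<forall>x\<in>span Bs. \<bar>representation Bs x b\<bar> \<le> (1 / infdist b W) * norm x"
    using d by (simp add: field_simps)
  then show ?thesis by blast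
qed

lemma finite_span_coordinates:
  fixes S :: "'a::real_normed_vector set"
  assumes "finite S" "span S = UNIV"
  shows "\<exists>(Bs :: 'a set) r. finite Bs \<and> (\<forall>b\<in>Bs. bounded_linear (r b))
           \<and> (\<forall>x. x = (\<Sum>b\<in>Bs. r b x *\<^sub>R b))"
proof -
  obtain Bs where Bs: "Bs \<subseteq> S" "independent Bs" "S \<subseteq> span Bs"
    using maximal_independent_subset by blast
  have fin: "finite Bs" using Bs(1) assms(1) finite_subset by blast
  have spB: "x \<in> span Bs" for x
    using span_mono[OF Bs(3)] assms(2) by (auto simp: span_span)
  have coord: "bounded_linear (\<lambda>x. representation Bs x b)" if b: "b \<in> Bs" for b
  proof -
    obtain C where C: "\<And>x. x \<in> span Bs \<Longrightarrow> \<bar>representation Bs x b\<bar> \<le> C * norm x"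
      using representation_bounded[OF fin Bs(2) b] by blast
    show ?thesis
    proof (rule bounded_linear_intro[where K = C])
      show "representation Bs (x + y) b = representation Bs x b + representation Bs y b" for x y
        using representation_add[OF Bs(2) spB spB] by simp
      show "representation Bs (c *\<^sub>R x) b = c *\<^sub>R representation Bs x b" for c x
        using representation_scale[OF Bs(2) spB] by simp
      show "norm (representation Bs x b) \<le> norm x * C" for x
        using C[OF spB] by (simp add: mult.commute)
    qed
  qed
  show ?thesis
  proof (intro exI conjI)
    show "finite Bs" by (rule fin)
    show "\<forall>b\<in>Bs. bounded_linear (\<lambda>x. representation Bs x b)" using coord by blast
    show "\<forall>x. x = (\<Sum>b\<in>Bs. representation Bs x b *\<^sub>R b)"
      using sum_representation_eq[OF Bs(2) spB fin order_refl] by simp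
  qed
qed

lemma cscale_eq_scaleR_combination: "cscale c x = Re c *\<^sub>R x + Im c *\<^sub>R cscale \<i> x"
proof -
  have "c = complex_of_real (Re c) + complex_of_real (Im c) * \<i>"
    by (simp add: complex_eq_iff)
  then have "cscale c x = cscale (complex_of_real (Re c) + complex_of_real (Im c) * \<i>) x"
    by (rule arg_cong)
  then show ?thesis
    by (simp add: cscale_add_left cscale_cscale[symmetric] cscale_of_real)
qed

lemma complex_finite_dim_real_span:
  assumes "complex_finite_dim (UNIV :: 'u::complex_normed_space set)"
  shows "\<exists>S :: 'u set. finite S \<and> span S = UNIV"
proof -
  obtain S :: "'u set" where S: "finite S" "\<And>x. \<exists>c. x = (\<Sum>s\<in>S. cscale (c s) s)"
    using assms unfolding complex_finite_dim_def by blast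
  define S' where "S' = S \<union> cscale \<i> ` S"
  have cscale_in: "cscale c s \<in> span S'" if "s \<in> S" for c s
    unfolding cscale_eq_scaleR_combination[of c s] S'_def using that
    by (intro span_add span_scale span_base) auto
  have "x \<in> span S'" for x
  proof -
    obtain c where "x = (\<Sum>s\<in>S. cscale (c s) s)" using S(2) by blast
    then show ?thesis using cscale_in by (simp add: span_sum)
  qed
  moreover have "finite S'" using S(1) unfolding S'_def by simp
  ultimately show ?thesis by blast
qed

lemma complex_finite_dim_coordinates:
  assumes "complex_finite_dim (UNIV :: 'u::complex_normed_space set)"
  shows "\<exists>(Bs :: 'u set) (c :: 'u \<Rightarrow> 'u \<Rightarrow> complex). finite Bs \<and> (\<forall>b\<in>Bs. bounded_linear (c b))
           \<and> (\<forall>x. x = (\<Sum>b\<in>Bs. cscale (c b x) b))"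
proof -
  obtain S :: "'u set" where S: "finite S" "span S = UNIV"
    using complex_finite_dim_real_span[OF assms] by blast
  obtain Bs :: "'u set" and r where Bs: "finite Bs \<and> (\<forall>b\<in>Bs. bounded_linear (r b))
      \<and> (\<forall>x. x = (\<Sum>b\<in>Bs. r b x *\<^sub>R b))"
    using finite_span_coordinates[OF S] by (elim exE) (erule that)
  show ?thesis
  proof (intro exI conjI allI)
    show "finite Bs" using Bs by (rule conjunct1)
    show "\<forall>b\<in>Bs. bounded_linear (\<lambda>x. complex_of_real (r b x))"
      using Bs bounded_linear_compose[OF bounded_linear_of_real] by blast
    fix x
    have "x = (\<Sum>b\<in>Bs. r b x *\<^sub>R b)" using Bs[THEN conjunct2, THEN conjunct2] by (rule spec)
    also have "\<dots> = (\<Sum>b\<in>Bs. cscale (complex_of_real (r b x)) b)" by (simp add: cscale_of_real)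
    finally show "x = (\<Sum>b\<in>Bs. cscale (complex_of_real (r b x)) b)" .
  qed
qed

lemma bounded_linear_cscale_left: "bounded_linear (\<lambda>z. cscale z x)"
proof (rule bounded_linear_intro[where K = "norm x"])
  show "cscale (z + w) x = cscale z x + cscale w x" for z w by (rule cscale_add_left)
  show "cscale (r *\<^sub>R z) x = r *\<^sub>R cscale z x" for r z
    by (simp add: scaleR_conv_of_real cscale_cscale[symmetric] cscale_of_real)
  show "norm (cscale z x) \<le> norm z * norm x" for z by (simp add: norm_cscale)
qed

section \<open>Admissibility\<close>

lemma extrapolation_space_linear_embedding:
  assumes "extrapolation_space T \<beta> j Tm"
  shows "linear j"
proof
  show "j (x + y) = j x + j y" for x y
    using assms by (simp add: extrapolation_space_def)
  have "j (cscale c x) = cscale c (j x)" for c x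
    using assms by (simp add: extrapolation_space_def)
  then show "j (c *\<^sub>R x) = c *\<^sub>R j x" for c x
    by (simp flip: cscale_of_real)
qed

lemma extrapolation_space_linear_semigroup:
  assumes "extrapolation_space T \<beta> j Tm" "0 \<le> s"
  shows "linear (Tm s)"
proof -
  have "bounded_linear (Tm s)"
    using assms unfolding extrapolation_space_def cbounded_linear_def by blast
  then show ?thesis by (rule bounded_linear.linear)
qed

lemma z_admissible_comp:
  fixes L :: "'v::complex_normed_space \<Rightarrow> 'u::complex_normed_space"
  assumes Z: "valid_zspace Z" and B: "z_admissible Z Tm j B" and L: "bounded_linear L"
  shows "z_admissible Z Tm j (\<lambda>v. B (L v))"
  unfolding z_admissible_def
proof (intro allI impI)
  fix t and u :: "real \<Rightarrow> 'v" assume t: "0 < t" and u: "zmem Z {0..t} u"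
  have "zmem Z {0..t} (\<lambda>s. L (u s))"
    using zmem_bounded_linear[OF Z _ L u] by simp
  then show "\<exists>x. ((\<lambda>s. Tm s (B (L (u s)))) has_integral j x) {0..t}"
    using B t unfolding z_admissible_def by blast
qed

lemma inf_z_admissible_comp:
  fixes L :: "'v::complex_normed_space \<Rightarrow> 'u::complex_normed_space"
  assumes Z: "valid_zspace Z" and B: "inf_z_admissible Z Tm j B" and L: "bounded_linear L"
  shows "inf_z_admissible Z Tm j (\<lambda>v. B (L v))"
proof -
  obtain M where M: "\<And>t u. 0 < t \<Longrightarrow> zmem Z {0..t} (u :: real \<Rightarrow> 'u) \<Longrightarrow>
      \<exists>x. ((\<lambda>s. Tm s (B (u s))) has_integral j x) {0..t} \<and> norm x \<le> M * znorm Z {0..t} u"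
    using B unfolding inf_z_admissible_def by blast
  obtain K where K: "K > 0" "\<And>x. norm (L x) \<le> norm x * K"
    using bounded_linear.pos_bounded[OF L] by blast
  show ?thesis
    unfolding inf_z_admissible_def
  proof (rule exI[where x = "max M 0 * K"], intro allI impI)
    fix t and u :: "real \<Rightarrow> 'v" assume t: "0 < t" and u: "zmem Z {0..t} u"
    have Lu: "zmem Z {0..t} (\<lambda>s. L (u s))"
      using zmem_bounded_linear[OF Z _ L u] by simp
    obtain x where x: "((\<lambda>s. Tm s (B (L (u s)))) has_integral j x) {0..t}"
      and x_le: "norm x \<le> M * znorm Z {0..t} (\<lambda>s. L (u s))"
      using M[OF t Lu] by blast
    have "0 \<le> znorm Z {0..t} (\<lambda>s. L (u s))"
      using t by (intro znorm_nonneg[OF Z _ _ Lu]) auto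
    then have "norm x \<le> max M 0 * znorm Z {0..t} (\<lambda>s. L (u s))"
      using x_le by (meson max.cobounded1 mult_right_mono order_trans)
    moreover have "znorm Z {0..t} (\<lambda>s. L (u s)) \<le> K * znorm Z {0..t} u"
    proof (rule znorm_le_scaled[OF Z _ _ u Lu K(1)])
      show "norm (L (u s)) \<le> K * norm (u s)" for s
        using K(2)[of "u s"] by (simp add: mult.commute)
    qed (use t in auto)
    ultimately have "norm x \<le> (max M 0 * K) * znorm Z {0..t} u"
      by (metis max.cobounded2 mult.assoc mult_left_mono order_trans)
    then show "\<exists>x. ((\<lambda>s. Tm s (B (L (u s)))) has_integral j x) {0..t}
        \<and> norm x \<le> (max M 0 * K) * znorm Z {0..t} u"
      using x by blast
  qed
qed

lemma has_integral_semigroup_sum: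
  assumes "finite I" "linear j" "\<And>s. 0 \<le> s \<Longrightarrow> linear (Tm s)"
    and "\<And>i. i \<in> I \<Longrightarrow> ((\<lambda>s. Tm s (B i (u s))) has_integral j (x i)) {0..t}"
  shows "((\<lambda>s. Tm s (\<Sum>i\<in>I. B i (u s))) has_integral j (\<Sum>i\<in>I. x i)) {0..t}"
proof -
  have "((\<lambda>s. \<Sum>i\<in>I. Tm s (B i (u s))) has_integral (\<Sum>i\<in>I. j (x i))) {0..t}"
    using assms(1,4) by (rule has_integral_sum)
  moreover have "Tm s (\<Sum>i\<in>I. B i (u s)) = (\<Sum>i\<in>I. Tm s (B i (u s)))" if "s \<in> {0..t}" for s
    using assms(3) that by (simp add: linear_sum)
  then have "((\<lambda>s. Tm s (\<Sum>i\<in>I. B i (u s))) has_integral y) {0..t}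
      \<longleftrightarrow> ((\<lambda>s. \<Sum>i\<in>I. Tm s (B i (u s))) has_integral y) {0..t}" for y
    by (rule has_integral_cong)
  ultimately show ?thesis
    by (simp add: linear_sum[OF assms(2)])
qed

lemma z_admissible_sum:
  fixes B :: "'i \<Rightarrow> 'v::complex_normed_space \<Rightarrow> 'm::complex_normed_space"
  assumes "finite I" "linear j" "\<And>s. 0 \<le> s \<Longrightarrow> linear (Tm s)"
    and B: "\<And>i. i \<in> I \<Longrightarrow> z_admissible Z Tm j (B i)"
  shows "z_admissible Z Tm j (\<lambda>v. \<Sum>i\<in>I. B i v)"
  unfolding z_admissible_def
proof (intro allI impI)
  fix t and u :: "real \<Rightarrow> 'v" assume "0 < t" "zmem Z {0..t} u"
  then have "\<forall>i\<in>I. \<exists>x. ((\<lambda>s. Tm s (B i (u s))) has_integral j x) {0..t}"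
    using B unfolding z_admissible_def by blast
  from bchoice[OF this]
  obtain x where x: "\<And>i. i \<in> I \<Longrightarrow> ((\<lambda>s. Tm s (B i (u s))) has_integral j (x i)) {0..t}"
    by blast
  have "((\<lambda>s. Tm s (\<Sum>i\<in>I. B i (u s))) has_integral j (\<Sum>i\<in>I. x i)) {0..t}"
    using has_integral_semigroup_sum[of I j Tm B u x t, OF assms(1-3) x] .
  then show "\<exists>x. ((\<lambda>s. Tm s (\<Sum>i\<in>I. B i (u s))) has_integral j x) {0..t}" ..
qed

lemma inf_z_admissible_sum:
  fixes B :: "'i \<Rightarrow> 'v::complex_normed_space \<Rightarrow> 'm::complex_normed_space"
  assumes "finite I" "linear j" "\<And>s. 0 \<le> s \<Longrightarrow> linear (Tm s)"
    and B: "\<And>i. i \<in> I \<Longrightarrow> inf_z_admissible Z Tm j (B i)"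
  shows "inf_z_admissible Z Tm j (\<lambda>v. \<Sum>i\<in>I. B i v)"
proof -
  have "\<forall>i\<in>I. \<exists>M. \<forall>t>0. \<forall>u :: real \<Rightarrow> 'v. zmem Z {0..t} u \<longrightarrow>
      (\<exists>x. ((\<lambda>s. Tm s (B i (u s))) has_integral j x) {0..t} \<and> norm x \<le> M * znorm Z {0..t} u)"
    using B unfolding inf_z_admissible_def by blast
  from bchoice[OF this] obtain M where M: "\<And>i t (u :: real \<Rightarrow> 'v). i \<in> I \<Longrightarrow> 0 < t \<Longrightarrow> zmem Z {0..t} u \<Longrightarrow>
      \<exists>x. ((\<lambda>s. Tm s (B i (u s))) has_integral j x) {0..t} \<and> norm x \<le> M i * znorm Z {0..t} u"
    by blast
  show ?thesis
    unfolding inf_z_admissible_def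
  proof (rule exI[where x = "\<Sum>i\<in>I. M i"], intro allI impI)
    fix t and u :: "real \<Rightarrow> 'v" assume "0 < t" "zmem Z {0..t} u"
    then have "\<forall>i\<in>I. \<exists>x. ((\<lambda>s. Tm s (B i (u s))) has_integral j x) {0..t} \<and> norm x \<le> M i * znorm Z {0..t} u"
      using M by blast
    from bchoice[OF this] obtain x where x: "\<And>i. i \<in> I \<Longrightarrow> ((\<lambda>s. Tm s (B i (u s))) has_integral j (x i)) {0..t}"
      and x_le: "\<And>i. i \<in> I \<Longrightarrow> norm (x i) \<le> M i * znorm Z {0..t} u"
      by blast
    have "norm (\<Sum>i\<in>I. x i) \<le> (\<Sum>i\<in>I. norm (x i))"
      by (rule norm_sum)
    also have "\<dots> \<le> (\<Sum>i\<in>I. M i * znorm Z {0..t} u)"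
      using x_le by (rule sum_mono)
    also have "\<dots> = (\<Sum>i\<in>I. M i) * znorm Z {0..t} u"
      by (simp add: sum_distrib_right)
    finally show "\<exists>x. ((\<lambda>s. Tm s (\<Sum>i\<in>I. B i (u s))) has_integral j x) {0..t}
        \<and> norm x \<le> (\<Sum>i\<in>I. M i) * znorm Z {0..t} u"
      using has_integral_semigroup_sum[of I j Tm B u x t, OF assms(1-3) x]
      by (intro exI conjI)
  qed
qed

lemma finite_dim_property_iff_rank_one:
  fixes B :: "'u::complex_normed_space \<Rightarrow> 'm::complex_normed_space"
    and P :: "('u \<Rightarrow> 'm) \<Rightarrow> bool" and Q :: "(complex \<Rightarrow> 'm) \<Rightarrow> bool"
  assumes fd: "complex_finite_dim (UNIV :: 'u set)" and B: "cbounded_linear B"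
    and P_Q: "\<And>B' (L :: complex \<Rightarrow> 'u). P B' \<Longrightarrow> bounded_linear L \<Longrightarrow> Q (\<lambda>z. B' (L z))"
    and Q_P: "\<And>B' (L :: 'u \<Rightarrow> complex). Q B' \<Longrightarrow> bounded_linear L \<Longrightarrow> P (\<lambda>v. B' (L v))"
    and P_sum: "\<And>I (B' :: 'u \<Rightarrow> 'u \<Rightarrow> 'm). finite I \<Longrightarrow> (\<And>i. i \<in> I \<Longrightarrow> P (B' i))
      \<Longrightarrow> P (\<lambda>v. \<Sum>i\<in>I. B' i v)"
  shows "P B \<longleftrightarrow> (\<forall>f. Q (\<lambda>z. cscale z (B f)))"
proof -
  have B_lin: "linear B" and B_cscale: "\<And>c x. B (cscale c x) = cscale c (B x)"
    using B bounded_linear.linear unfolding cbounded_linear_def by auto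
  obtain Bs :: "'u set" and c where coords: "finite Bs \<and> (\<forall>b\<in>Bs. bounded_linear (c b))
      \<and> (\<forall>x. x = (\<Sum>b\<in>Bs. cscale (c b x) b))"
    using complex_finite_dim_coordinates[OF fd] by (elim exE) (erule that)
  note fin = coords[THEN conjunct1]
    and c_bl = coords[THEN conjunct2, THEN conjunct1]
    and decomp = coords[THEN conjunct2, THEN conjunct2]
  have B_eq: "B = (\<lambda>v. \<Sum>b\<in>Bs. cscale (c b v) (B b))"
  proof (rule ext)
    fix v
    have "B v = B (\<Sum>b\<in>Bs. cscale (c b v) b)"
      using spec[OF decomp, of v] by (rule arg_cong)
    also have "\<dots> = (\<Sum>b\<in>Bs. cscale (c b v) (B b))"
      by (simp add: linear_sum[OF B_lin] B_cscale)
    finally show "B v = (\<Sum>b\<in>Bs. cscale (c b v) (B b))" .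
  qed
  show ?thesis
  proof
    assume "P B"
    show "\<forall>f. Q (\<lambda>z. cscale z (B f))"
      using P_Q[OF \<open>P B\<close> bounded_linear_cscale_left] by (simp add: B_cscale)
  next
    assume Q: "\<forall>f. Q (\<lambda>z. cscale z (B f))"
    have "P (\<lambda>v. cscale (c b v) (B b))" if "b \<in> Bs" for b
    proof (rule Q_P)
      show "Q (\<lambda>z. cscale z (B b))" using Q by (rule spec)
      show "bounded_linear (c b)" using c_bl that by (rule bspec)
    qed
    then have "P (\<lambda>v. \<Sum>b\<in>Bs. cscale (c b v) (B b))"
      by (rule P_sum[OF fin])
    then show "P B" by (simp only: B_eq[symmetric])
  qed
qed

theorem proposition4:
  fixes T :: "real \<Rightarrow> 'x::{complex_normed_space,banach} \<Rightarrow> 'x"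
    and \<beta> :: complex
    and j :: "'x \<Rightarrow> 'm::{complex_normed_space,banach}"
    and Tm :: "real \<Rightarrow> 'm \<Rightarrow> 'm"
    and B :: "'u::{complex_normed_space,banach} \<Rightarrow> 'm"
    and Z :: zspace
  assumes "c0_semigroup T"
    and "extrapolation_space T \<beta> j Tm"
    and "complex_finite_dim (UNIV :: 'u set)"
    and "valid_zspace Z"
    and "cbounded_linear B"
  shows "(z_admissible Z Tm j B \<longleftrightarrow>
            (\<forall>f. z_admissible Z Tm j (\<lambda>z::complex. cscale z (B f))))
       \<and> (inf_z_admissible Z Tm j B \<longleftrightarrow>
            (\<forall>f. inf_z_admissible Z Tm j (\<lambda>z::complex. cscale z (B f))))"
proof -
  note fd = assms(3) and Z = assms(4) and B = assms(5)
  have j: "linear j" and Tm: "\<And>s. 0 \<le> s \<Longrightarrow> linear (Tm s)"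
    using assms(2) by (rule extrapolation_space_linear_embedding extrapolation_space_linear_semigroup)+
  have "z_admissible Z Tm j B \<longleftrightarrow> (\<forall>f. z_admissible Z Tm j (\<lambda>z::complex. cscale z (B f)))"
    using fd B z_admissible_comp[OF Z] z_admissible_comp[OF Z] z_admissible_sum[OF _ j Tm]
    by (rule finite_dim_property_iff_rank_one)
  moreover have "inf_z_admissible Z Tm j B \<longleftrightarrow>
      (\<forall>f. inf_z_admissible Z Tm j (\<lambda>z::complex. cscale z (B f)))"
    using fd B inf_z_admissible_comp[OF Z] inf_z_admissible_comp[OF Z] inf_z_admissible_sum[OF _ j Tm]
    by (rule finite_dim_property_iff_rank_one)
  ultimately show ?thesis ..
qed

end
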